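(* Let $K$ be a convex body in $\mathbb{R}^d$ and $F$ a linear subspace of $\mathbb{R}^d$. Let $E=AB^d$, where $A$ is a positive definite $F$-operator, be an origin-centered ellipsoid of revolution with axis $F$ contained in $K$ which has maximal volume among all ellipsoids of revolution with axis $F$ contained in $K$. Then there are unit vectors $u_1,\dots,u_m$ and positive weights $\alpha_1,\dots,\alpha_m$ such that $(Au_1,A^{-1}u_1),\dots,(Au_m,A^{-1}u_m)$ are contact pairs of $E$ and $K$, and \[ P_F\Big(\sum_i\alpha_iu_i\otimes u_i\Big)P_F=P_F,\qquad\sum_i\alpha_iu_i=0,\qquad\sum_i\alpha_i=d. \]
   Context: A convex body is a compact convex set with nonempty interior; $B^d$ is the closed unit ball centered at the origin. For a linear subspace $F$, an $F$-operator is an invertible linear operator $A$ on $\mathbb{R}^d$ such that $F$ and $F^\perp$ are invariant under $A$ and $A|_{F^\perp}$ is a nonzero multiple of the identity on $F^\perp$. An ellipsoid of revolution with axis $F$ is a set $A'B^d+z$ with $A'$ an $F$-operator and $z\in\mathbb{R}^d$. $P_F$ is orthogonal projection onto $F$. The polar of $S$ is $S^\circ=\{p:\langle x,p\rangle\le1\ \forall x\in S\}$. For convex bodies $E\subseteq K$, a contact pair of $E$ and $K$ is a pair $(v,p)$ with $v\in\partial E\cap\partial K$, $p\in\partial E^\circ\cap\partial K^\circ$, $\langle p,v\rangle=1$. $u\otimes u$ is the operator $x\mapsto\langle u,x\rangle u$. *)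

theory Defs
  imports "HOL-Analysis.Analysis"
begin

definition convex_body :: "'a::euclidean_space set \<Rightarrow> bool" where
  "convex_body K \<longleftrightarrow> compact K \<and> convex K \<and> interior K \<noteq> {}"

definition orth_compl :: "'a::euclidean_space set \<Rightarrow> 'a set" where
  "orth_compl F = {x. \<forall>y\<in>F. x \<bullet> y = 0}"

definition F_operator :: "'a::euclidean_space set \<Rightarrow> ('a \<Rightarrow> 'a) \<Rightarrow> bool" where
  "F_operator F A \<longleftrightarrow> linear A \<and> bij A \<and> A ` F \<subseteq> F \<and>
     A ` orth_compl F \<subseteq> orth_compl F \<and>
     (\<exists>c. c \<noteq> 0 \<and> (\<forall>x\<in>orth_compl F. A x = c *\<^sub>R x))"

definition pos_def_op :: "('a::euclidean_space \<Rightarrow> 'a) \<Rightarrow> bool" where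
  "pos_def_op A \<longleftrightarrow> linear A \<and> (\<forall>x y. A x \<bullet> y = x \<bullet> A y) \<and> (\<forall>x. x \<noteq> 0 \<longrightarrow> A x \<bullet> x > 0)"

definition ellipsoid_rev :: "'a::euclidean_space set \<Rightarrow> 'a set \<Rightarrow> bool" where
  "ellipsoid_rev F E \<longleftrightarrow> (\<exists>A' z. F_operator F A' \<and> E = (\<lambda>x. A' x + z) ` cball 0 1)"

definition polar :: "'a::euclidean_space set \<Rightarrow> 'a set" where
  "polar S = {p. \<forall>x\<in>S. x \<bullet> p \<le> 1}"

definition contact_pair :: "'a::euclidean_space set \<Rightarrow> 'a set \<Rightarrow> 'a \<Rightarrow> 'a \<Rightarrow> bool" where
  "contact_pair E K v p \<longleftrightarrow> v \<in> frontier E \<inter> frontier K \<and>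
     p \<in> frontier (polar E) \<inter> frontier (polar K) \<and> p \<bullet> v = 1"

definition orth_proj :: "'a::euclidean_space set \<Rightarrow> 'a \<Rightarrow> 'a" where
  "orth_proj F x = (THE y. y \<in> F \<and> (\<forall>z\<in>F. (x - y) \<bullet> z = 0))"

definition tensor_self :: "'a::euclidean_space \<Rightarrow> 'a \<Rightarrow> 'a" where
  "tensor_self u x = (u \<bullet> x) *\<^sub>R u"

end

theory Submission
  imports Defs
begin

(* Let U be the set of unit vectors u with A u on the boundary of K. For each of them the
   hyperplane supporting K at A u also supports the ellipsoid A B, so (A u, A\<inverse> u) is a
   contact pair. The three identities say that the point (P\<^sub>F / d, 0) lies in the convex hull
   of the points (P\<^sub>F (u \<otimes> u) P\<^sub>F, u), u \<in> U. If it did not, a separating functional would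
   yield a self-adjoint map S, scalar on the orthogonal complement of F, with trace S > 0, and a
   vector z with <S u, u> + <z, u> < 0 on U. For small \<epsilon> > 0 the ellipsoid of revolution
   A (I + \<epsilon> S) B + \<epsilon> A z then still lies in K (a compactness argument with the support
   function of A\<inverse> K), while its volume det (I + \<epsilon> S) vol (A B) exceeds vol (A B), because
   the derivative of det (I + \<epsilon> S) at 0 is trace S > 0. This contradicts maximality. *)

section \<open>Volumes of linear images\<close>

lemma compact_linear_image:
  fixes f :: "'a::euclidean_space \<Rightarrow> 'b::real_normed_vector"
  shows "linear f \<Longrightarrow> compact S \<Longrightarrow> compact (f ` S)"
  by (metis compact_continuous_image linear_continuous_on linear_linear)

(* Coordinates with respect to Basis identify 'a with real ^ 'a basis_index, the setting of the
   determinant formula measure_linear_image for volumes of linear images. *)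
typedef (overloaded) ('a::euclidean_space) basis_index = "Basis :: 'a set"
  morphisms basis_vec basis_index
  using nonempty_Basis by blast

instance basis_index :: (euclidean_space) finite
proof
  have "(UNIV :: 'a basis_index set) = basis_index ` Basis"
    using type_definition.Abs_image[OF type_definition_basis_index] by (rule sym)
  then show "finite (UNIV :: 'a basis_index set)" by (metis finite_Basis finite_imageI)
qed

instantiation basis_index :: (euclidean_space) linorder
begin
definition less_eq_basis_index :: "'a basis_index \<Rightarrow> 'a basis_index \<Rightarrow> bool"
  where "less_eq_basis_index i j \<longleftrightarrow> to_nat i \<le> to_nat j"
definition less_basis_index :: "'a basis_index \<Rightarrow> 'a basis_index \<Rightarrow> bool"
  where "less_basis_index i j \<longleftrightarrow> to_nat i < to_nat j"
instance
  by standard (auto simp: less_eq_basis_index_def less_basis_index_def)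
end

(* measure_linear_image requires a well-ordered index type. *)
instance basis_index :: (euclidean_space) wellorder
proof
  fix P :: "'a basis_index \<Rightarrow> bool" and a
  assume step: "\<And>i. (\<And>j. j < i \<Longrightarrow> P j) \<Longrightarrow> P i"
  have "P i" if "to_nat i = n" for n i
    using that by (induction n arbitrary: i rule: less_induct) (auto intro: step simp: less_basis_index_def)
  then show "P a" by blast
qed

lemma bij_betw_basis_vec: "bij_betw basis_vec UNIV (Basis :: 'a::euclidean_space set)"
  by (metis bij_betw_def basis_vec_inject inj_onI type_definition.Rep_range type_definition_basis_index)

lemma sum_basis_index: "(\<Sum>i\<in>UNIV. f (basis_vec i)) = (\<Sum>b\<in>Basis. f b)"
  using sum.reindex_bij_betw[OF bij_betw_basis_vec] .

lemma prod_basis_index: "(\<Prod>i\<in>UNIV. f (basis_vec i)) = (\<Prod>b\<in>Basis. f b)"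
  using prod.reindex_bij_betw[OF bij_betw_basis_vec] .

lemma inner_basis_vec: "basis_vec i \<bullet> basis_vec j = (if i = j then 1 else 0)"
  using basis_vec[of i] basis_vec[of j] basis_vec_inject[of i j] by (auto simp: inner_Basis)

definition coords :: "'a::euclidean_space \<Rightarrow> real ^ 'a basis_index" where
  "coords x = (\<chi> i. x \<bullet> basis_vec i)"

definition of_coords :: "real ^ 'a basis_index \<Rightarrow> 'a::euclidean_space" where
  "of_coords y = (\<Sum>i\<in>UNIV. (y $ i) *\<^sub>R basis_vec i)"

lemma coords_of_coords [simp]: "coords (of_coords y) = y"
  by (simp add: coords_def of_coords_def vec_eq_iff inner_sum_left inner_basis_vec if_distrib
      cong: if_cong)

lemma of_coords_coords [simp]: "of_coords (coords x) = x"
  using sum_basis_index[of "\<lambda>b. (x \<bullet> b) *\<^sub>R b"]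
  by (simp add: of_coords_def coords_def euclidean_representation)

lemma linear_coords: "linear coords"
  by (rule linearI) (auto simp: coords_def vec_eq_iff inner_add_left)

lemma linear_of_coords: "linear of_coords"
  by (rule linearI) (auto simp: of_coords_def sum.distrib scaleR_add_left scaleR_sum_right)

lemma of_coords_axis: "of_coords (axis i 1) = basis_vec i"
  by (simp add: of_coords_def axis_def if_distrib[of "\<lambda>c. c *\<^sub>R _"] cong: if_cong)

lemma ball_Basis_iff: "(\<forall>b\<in>(Basis :: 'a::euclidean_space set). P b) \<longleftrightarrow> (\<forall>i. P (basis_vec i))"
  using type_definition.Rep_range[OF type_definition_basis_index] by (metis rangeE rangeI)

lemma inner_of_coords_basis_vec: "of_coords y \<bullet> basis_vec i = y $ i"
  using coords_of_coords[of y] by (simp add: coords_def vec_eq_iff)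

lemma lborel_of_coords: "distr lborel borel of_coords = (lborel :: 'a::euclidean_space measure)"
proof (rule lborel_eqI[symmetric])
  fix l u :: 'a
  assume le: "\<And>b. b \<in> Basis \<Longrightarrow> l \<bullet> b \<le> u \<bullet> b"
  have "of_coords y \<in> box l u \<longleftrightarrow> y \<in> box (coords l) (coords u)" for y
    unfolding mem_box_cart mem_box ball_Basis_iff by (simp add: coords_def inner_of_coords_basis_vec)
  then have box: "of_coords -` box l u = box (coords l) (coords u)" by auto
  have "emeasure (distr lborel borel of_coords) (box l u) = emeasure lborel (of_coords -` box l u)"
    by (simp add: emeasure_distr linear_continuous_on linear_linear linear_of_coords
        borel_measurable_continuous_onI)
  also have "\<dots> = (\<Prod>b\<in>Basis. (coords u - coords l) \<bullet> b)"
    unfolding box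
    by (intro emeasure_lborel_box) (auto simp: Basis_vec_def inner_axis coords_def basis_vec le)
  also have "\<dots> = (\<Prod>b\<in>Basis. (u - l) \<bullet> b)"
    using prod_basis_index[of "\<lambda>b. (u - l) \<bullet> b"]
    by (simp add: Basis_vec_def prod.UNION_disjoint axis_eq_axis inner_axis coords_def
        inner_diff_left)
  finally show "emeasure (distr lborel borel of_coords) (box l u) = (\<Prod>b\<in>Basis. (u - l) \<bullet> b)" .
qed simp

lemma measure_coords_image:
  fixes S :: "'a::euclidean_space set"
  assumes "compact S"
  shows "measure lebesgue (coords ` S) = measure lebesgue S"
proof -
  have "coords ` S = of_coords -` S"
    by (auto simp: image_iff) (metis coords_of_coords)
  moreover have "compact (coords ` S)"
    using linear_coords assms by (rule compact_linear_image)
  moreover have "of_coords \<in> borel_measurable lborel"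
    by (simp add: linear_continuous_on linear_linear linear_of_coords borel_measurable_continuous_onI)
  ultimately have "measure lebesgue (coords ` S) = measure (distr lborel borel of_coords) S"
    using assms by (subst measure_distr) (auto simp: measure_completion borel_compact)
  then show ?thesis
    using assms by (simp add: lborel_of_coords measure_completion borel_compact)
qed

definition coord_matrix :: "('a::euclidean_space \<Rightarrow> 'a) \<Rightarrow> real ^ 'a basis_index ^ 'a basis_index" where
  "coord_matrix f = matrix (\<lambda>y. coords (f (of_coords y)))"

lemma linear_in_coords: "linear f \<Longrightarrow> linear (\<lambda>y. coords (f (of_coords y)))"
  using linear_compose[OF linear_compose[OF linear_of_coords] linear_coords] by (simp add: comp_def)

lemma coord_matrix_nth: "coord_matrix f $ i $ j = f (basis_vec j) \<bullet> basis_vec i"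
  by (simp add: coord_matrix_def matrix_def coords_def of_coords_axis)

definition trace_op :: "('a::euclidean_space \<Rightarrow> 'a) \<Rightarrow> real" where
  "trace_op f = (\<Sum>b\<in>Basis. b \<bullet> f b)"

lemma trace_coord_matrix: "trace (coord_matrix f) = trace_op f"
  using sum_basis_index[of "\<lambda>b. b \<bullet> f b"]
  by (simp add: trace_def trace_op_def coord_matrix_nth inner_commute)

lemma det_coord_matrix_nonzero_iff:
  assumes "linear f"
  shows "det (coord_matrix f) \<noteq> 0 \<longleftrightarrow> inj f"
proof -
  have "inj (\<lambda>y. coords (f (of_coords y))) \<longleftrightarrow> inj f"
    by (auto simp: inj_def) (metis of_coords_coords coords_of_coords)+
  then show ?thesis
    by (simp add: coord_matrix_def det_nz_iff_inj linear_in_coords assms)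
qed

lemma measure_linear_image_euclidean:
  fixes f :: "'a::euclidean_space \<Rightarrow> 'a"
  assumes f: "linear f" and S: "compact S"
  shows "measure lebesgue (f ` S) = \<bar>det (coord_matrix f)\<bar> * measure lebesgue S"
proof -
  have "measure lebesgue (f ` S) = measure lebesgue (coords ` f ` S)"
    using measure_coords_image[OF compact_linear_image[OF f S]] by simp
  also have "coords ` f ` S = (\<lambda>y. coords (f (of_coords y))) ` coords ` S"
    by (simp add: image_image)
  also have "measure lebesgue \<dots> = \<bar>det (coord_matrix f)\<bar> * measure lebesgue (coords ` S)"
    unfolding coord_matrix_def
    using measure_linear_image[OF linear_in_coords[OF f]
        lmeasurable_compact[OF compact_linear_image[OF linear_coords S]]] .
  finally show ?thesis by (simp add: measure_coords_image S)
qed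

lemma coord_matrix_id_plus:
  "coord_matrix (\<lambda>x. x + t *\<^sub>R S x) = mat 1 + t *\<^sub>R coord_matrix S"
  by (simp add: vec_eq_iff coord_matrix_nth inner_add_left inner_basis_vec mat_def)

lemma measure_cball_pos: "measure lebesgue (cball (0::'a::euclidean_space) 1) > 0"
  using content_cball_pos[of 1 "0::'a"] by (simp add: measure_completion)

lemma measure_translated_comp_image:
  fixes A M :: "'a::euclidean_space \<Rightarrow> 'a"
  assumes "linear A" "linear M" "compact S"
  shows "measure lebesgue ((\<lambda>x. A (M x) + w) ` S) = \<bar>det (coord_matrix M)\<bar> * measure lebesgue (A ` S)"
proof -
  have "(\<lambda>x. A (M x) + w) ` S = (+) w ` A ` M ` S"
    by (auto simp: image_image add.commute)
  then show ?thesis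
    using assms
    by (simp add: measure_translation measure_linear_image_euclidean compact_linear_image)
qed

lemma has_real_derivative_det_id_plus:
  fixes N :: "real ^ 'n ^ 'n"
  shows "((\<lambda>t. det (mat 1 + t *\<^sub>R N)) has_real_derivative trace N) (at 0)"
proof -
  note [derivative_intros] = has_field_derivative_prod
  define c where "c p i t = (if i = p i then 1 else 0) + t * N $ i $ p i" for p i and t :: real
  have det_eq: "det (mat 1 + t *\<^sub>R N) = (\<Sum>p\<in>{p. p permutes UNIV}. of_int (sign p) * (\<Prod>i\<in>UNIV. c p i t))"
    for t by (simp add: det_def mat_def c_def)
  have deriv_term: "(\<Sum>i\<in>UNIV. N $ i $ p i * (\<Prod>j\<in>UNIV - {i}. c p j 0)) = (if p = id then trace N else 0)"
    if p: "p permutes UNIV" for p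
  proof (cases "p = id")
    case False
    have "(\<Prod>j\<in>UNIV - {i}. c p j 0) = 0" for i
    proof -
      have "\<exists>j. j \<noteq> i \<and> p j \<noteq> j"
      proof (rule ccontr)
        assume "\<nexists>j. j \<noteq> i \<and> p j \<noteq> j"
        then have others: "p j = j" if "j \<noteq> i" for j using that by blast
        then have "p i = i" using p by (metis permutes_inj injD)
        then show False using False others by (metis eq_id_iff)
      qed
      then obtain j where "j \<noteq> i" "p j \<noteq> j" by blast
      then show ?thesis by (intro prod_zero) (auto simp: c_def intro!: bexI[of _ j])
    qed
    then show ?thesis using False by (simp del: prod_zero_iff)
  qed (simp add: trace_def c_def)
  have "((\<lambda>t. \<Sum>p\<in>{p. p permutes UNIV}. of_int (sign p) * (\<Prod>i\<in>UNIV. c p i t)) has_real_derivative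
      (\<Sum>p\<in>{p. p permutes UNIV}. of_int (sign p) * (\<Sum>i\<in>UNIV. N $ i $ p i * (\<Prod>j\<in>UNIV - {i}. c p j 0))))
      (at 0)"
    unfolding c_def by (auto intro!: derivative_eq_intros simp: mult.commute)
  also have "(\<Sum>p\<in>{p. p permutes UNIV}. of_int (sign p) * (\<Sum>i\<in>UNIV. N $ i $ p i * (\<Prod>j\<in>UNIV - {i}. c p j 0)))
      = trace N"
    by (simp add: deriv_term if_distrib[of "\<lambda>x. of_int (sign _) * x"] sum.delta' permutes_id sign_id
        cong: if_cong)
  finally show ?thesis by (simp add: det_eq)
qed

lemma eventually_det_id_plus_gt_1:
  fixes N :: "real ^ 'n ^ 'n"
  assumes "trace N > 0"
  shows "\<forall>\<^sub>F t in at_right 0. det (mat 1 + t *\<^sub>R N) > 1"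
proof -
  obtain d where "d > 0" "\<And>t. 0 < t \<Longrightarrow> t < d \<Longrightarrow> det (mat 1 + 0 *\<^sub>R N) < det (mat 1 + (0 + t) *\<^sub>R N)"
    using DERIV_pos_inc_right[OF has_real_derivative_det_id_plus assms] by blast
  then show ?thesis by (auto simp: eventually_at_right_field det_I)
qed

section \<open>Orthogonal projections\<close>

lemma orth_proj_witness_unique:
  assumes "subspace F" "y \<in> F" "\<forall>z\<in>F. (x - y) \<bullet> z = 0" "y' \<in> F" "\<forall>z\<in>F. (x - y') \<bullet> z = 0"
  shows "y' = y"
proof -
  have "y - y' \<in> F" using assms by (simp add: subspace_diff)
  then have "(x - y') \<bullet> (y - y') - (x - y) \<bullet> (y - y') = 0" using assms by simp
  then have "(y - y') \<bullet> (y - y') = 0" by (simp add: inner_diff_left)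
  then show ?thesis by simp
qed

lemma orth_proj_unique:
  assumes "subspace F" "y \<in> F" "\<forall>z\<in>F. (x - y) \<bullet> z = 0"
  shows "orth_proj F x = y"
  unfolding orth_proj_def
proof (rule the_equality)
  show "y \<in> F \<and> (\<forall>z\<in>F. (x - y) \<bullet> z = 0)" using assms by blast
  show "y' = y" if "y' \<in> F \<and> (\<forall>z\<in>F. (x - y') \<bullet> z = 0)" for y'
    using orth_proj_witness_unique[OF assms] that by blast
qed

lemma orth_proj_in_orthogonal:
  assumes "subspace F"
  shows "orth_proj F x \<in> F \<and> (\<forall>z\<in>F. (x - orth_proj F x) \<bullet> z = 0)"
proof -
  obtain y z where "y \<in> span F" "\<And>w. w \<in> span F \<Longrightarrow> orthogonal z w" "x = y + z"
    using orthogonal_subspace_decomp_exists by blast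
  then have "y \<in> F \<and> (\<forall>w\<in>F. (x - y) \<bullet> w = 0)"
    using assms by (metis add_diff_cancel_left' orthogonal_def span_eq_iff)
  then show ?thesis using orth_proj_unique[OF assms] by blast
qed

lemma orth_proj_in: "subspace F \<Longrightarrow> orth_proj F x \<in> F"
  using orth_proj_in_orthogonal by blast

lemma orth_proj_orthogonal: "subspace F \<Longrightarrow> z \<in> F \<Longrightarrow> (x - orth_proj F x) \<bullet> z = 0"
  using orth_proj_in_orthogonal by blast

lemma orth_proj_id: "subspace F \<Longrightarrow> x \<in> F \<Longrightarrow> orth_proj F x = x"
  by (rule orth_proj_unique) auto

lemma orth_proj_idem: "subspace F \<Longrightarrow> orth_proj F (orth_proj F x) = orth_proj F x"
  by (simp add: orth_proj_id orth_proj_in)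

lemma orth_proj_orth_compl: "subspace F \<Longrightarrow> x \<in> orth_compl F \<Longrightarrow> orth_proj F x = 0"
  by (rule orth_proj_unique) (auto simp: orth_compl_def subspace_0)

lemma inner_orth_proj_commute:
  assumes "subspace F"
  shows "orth_proj F x \<bullet> y = x \<bullet> orth_proj F y"
proof -
  have "orth_proj F x \<bullet> (y - orth_proj F y) = 0" "(x - orth_proj F x) \<bullet> orth_proj F y = 0"
    using orth_proj_orthogonal[OF assms orth_proj_in[OF assms]] by (simp_all add: inner_commute)
  then show ?thesis by (simp add: inner_diff_left inner_diff_right)
qed

lemma linear_orth_proj:
  assumes F: "subspace F"
  shows "linear (orth_proj F)"
proof (rule linearI)
  fix x y :: 'a and c :: real
  show "orth_proj F (x + y) = orth_proj F x + orth_proj F y"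
    using orth_proj_orthogonal[OF F, of _ x] orth_proj_orthogonal[OF F, of _ y]
    by (intro orth_proj_unique F subspace_add orth_proj_in)
      (auto simp: algebra_simps inner_diff_left inner_add_left)
  show "orth_proj F (c *\<^sub>R x) = c *\<^sub>R orth_proj F x"
    using orth_proj_orthogonal[OF F, of _ x]
    by (intro orth_proj_unique F subspace_scale orth_proj_in)
      (auto simp: inner_diff_left simp flip: scaleR_diff_right)
qed

section \<open>Contact pairs\<close>

lemma frontier_bij_linear_image:
  fixes f :: "'a::euclidean_space \<Rightarrow> 'a"
  assumes "linear f" "bij f"
  shows "frontier (f ` S) = f ` frontier S"
  using assms
  by (simp add: frontier_def closure_injective_linear_image interior_injective_linear_image
      bij_is_inj image_set_diff)

lemma linear_inv_bij:
  fixes f :: "'a::euclidean_space \<Rightarrow> 'a"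
  assumes "linear f" "bij f"
  shows "linear (inv f)" "bij (inv f)" "inv f (f x) = x" "f (inv f x) = x"
proof -
  have "inj f" "surj f" using assms(2) bij_is_inj bij_is_surj by auto
  show "linear (inv f)" by (rule inj_linear_imp_inv_linear[OF assms(1) \<open>inj f\<close>])
  show "bij (inv f)" by (rule bij_imp_bij_inv[OF assms(2)])
  show "inv f (f x) = x" by (rule inv_f_f[OF \<open>inj f\<close>])
  show "f (inv f x) = x" by (rule surj_f_inv_f[OF \<open>surj f\<close>])
qed

lemma frontier_radialI:
  fixes x :: "'a::real_normed_vector"
  assumes "x \<in> S" "\<And>t. t > 0 \<Longrightarrow> (1 + t) *\<^sub>R x \<notin> S"
  shows "x \<in> frontier S"
proof -
  have "x \<notin> interior S"
  proof
    assume "x \<in> interior S"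
    then obtain e where "e > 0" "ball x e \<subseteq> S" using mem_interior by blast
    define t where "t = e / (norm x + 1)"
    have pos: "0 < norm x + 1" using norm_ge_zero[of x] by linarith
    then have "t > 0" using \<open>e > 0\<close> by (simp add: t_def)
    have "dist x ((1 + t) *\<^sub>R x) = t * norm x"
      using \<open>t > 0\<close> by (simp add: dist_norm algebra_simps)
    also have "\<dots> < e"
      using \<open>e > 0\<close> pos by (simp add: t_def pos_divide_less_eq)
    finally show False using assms(2)[OF \<open>t > 0\<close>] \<open>ball x e \<subseteq> S\<close> by auto
  qed
  then show ?thesis using assms(1) closure_subset by (auto simp: frontier_def)
qed

lemma polar_cball: "polar (cball 0 1) = (cball 0 1 :: 'a::euclidean_space set)"
proof (intro set_eqI iffI)
  fix p :: 'a
  assume p: "p \<in> polar (cball 0 1)"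
  show "p \<in> cball 0 1"
  proof (cases "p = 0")
    case False
    then have "(1 / norm p) *\<^sub>R p \<in> cball 0 1" by simp
    then have "(1 / norm p) *\<^sub>R p \<bullet> p \<le> 1" using p unfolding polar_def by blast
    moreover have "(1 / norm p) *\<^sub>R p \<bullet> p = norm p"
      using False by (simp add: dot_square_norm power2_eq_square field_simps)
    ultimately show ?thesis by simp
  qed simp
next
  fix p :: 'a
  assume "p \<in> cball 0 1"
  then have "x \<bullet> p \<le> 1" if "norm x \<le> 1" for x
    using norm_cauchy_schwarz[of x p] mult_le_one[OF that norm_ge_zero, of p] by simp
  then show "p \<in> polar (cball 0 1)" by (simp add: polar_def)
qed

lemma polar_self_adjoint_image:
  "(\<And>x y. A x \<bullet> y = x \<bullet> A y) \<Longrightarrow> polar (A ` S) = A -` polar S"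
  by (auto simp: polar_def inner_commute)

lemma cball_subset_convex_frontier_inner_le_1:
  fixes K :: "'a::euclidean_space set"
  assumes "convex K" "cball 0 1 \<subseteq> K" "norm u = 1" "u \<in> frontier K" "x \<in> K"
  shows "x \<bullet> u \<le> 1"
proof -
  have "ball 0 1 \<subseteq> interior K"
    using interior_mono[OF subset_trans[OF ball_subset_cball assms(2)]] by simp
  then have "interior K \<noteq> {}" by auto
  then have "u \<in> closure K" "u \<notin> rel_interior K"
    using assms(4) by (simp_all add: rel_interior_nonempty_interior frontier_def)
  then obtain a where "a \<noteq> 0" and supp: "\<And>y. y \<in> closure K \<Longrightarrow> a \<bullet> u \<le> a \<bullet> y"
    using supporting_hyperplane_relative_frontier[OF assms(1)] by metis
  define c where "c = - a"
  have c_max: "c \<bullet> y \<le> c \<bullet> u" if "y \<in> K" for y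
    using supp[of y] that closure_subset by (force simp: c_def)
  have "(1 / norm c) *\<^sub>R c \<in> K" using assms(2) \<open>a \<noteq> 0\<close> by (auto simp: c_def)
  moreover have "c \<bullet> ((1 / norm c) *\<^sub>R c) = norm c"
    using \<open>a \<noteq> 0\<close> by (simp add: c_def dot_square_norm power2_eq_square field_simps)
  ultimately have "norm c \<le> c \<bullet> u"
    using c_max by metis
  then have "c \<bullet> u = norm c * norm u"
    using norm_cauchy_schwarz[of c u] assms(3) by simp
  then have "c = norm c *\<^sub>R u" using norm_cauchy_schwarz_eq[of c u] assms(3) by simp
  moreover have "u \<bullet> u = 1" using assms(3) by (simp add: dot_square_norm)
  ultimately have "c \<bullet> x = norm c * (x \<bullet> u)" and "c \<bullet> u = norm c"
    by (metis inner_scaleR_left inner_commute mult.right_neutral)+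
  then have "norm c * (x \<bullet> u) \<le> norm c * 1"
    using c_max[OF assms(5)] by simp
  then show ?thesis using \<open>a \<noteq> 0\<close> by (simp add: c_def)
qed

lemma contact_pair_of_frontier_point:
  fixes A :: "'a::euclidean_space \<Rightarrow> 'a"
  assumes A: "linear A" "bij A" "\<And>x y. A x \<bullet> y = x \<bullet> A y"
    and K: "convex K" "A ` cball 0 1 \<subseteq> K"
    and u: "norm u = 1" "A u \<in> frontier K"
  shows "contact_pair (A ` cball 0 1) K (A u) (inv A u)"
proof -
  note inv = linear_inv_bij[OF A(1,2)]
  have pairing: "inv A u \<bullet> A u = 1"
    using A(3)[of "inv A u" u] u(1) by (simp add: inv inner_commute dot_square_norm)
  have "A u \<in> frontier (A ` cball 0 1)"
    using u(1) by (simp add: frontier_bij_linear_image A(1,2))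
  moreover have "inv A u \<in> frontier (polar (A ` cball 0 1))"
  proof -
    have "polar (A ` cball 0 1) = inv A ` cball 0 1"
      by (simp add: polar_self_adjoint_image A(3) polar_cball bij_vimage_eq_inv_image A(2))
    then show ?thesis using u(1) by (simp add: frontier_bij_linear_image inv)
  qed
  moreover have "inv A u \<in> frontier (polar K)"
  proof (rule frontier_radialI)
    have "inv A x \<bullet> u \<le> 1" if "x \<in> K" for x
    proof (rule cball_subset_convex_frontier_inner_le_1)
      show "convex (inv A ` K)" using inv(1) K(1) by (rule convex_linear_image)
      show "cball 0 1 \<subseteq> inv A ` K" using K(2) by (force simp: inv)
      show "u \<in> frontier (inv A ` K)" using u(2) by (force simp: frontier_bij_linear_image inv)
    qed (use u(1) that in auto)
    moreover have "x \<bullet> inv A u = inv A x \<bullet> u" for x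
      using A(3)[of "inv A x" "inv A u"] by (simp add: inv)
    ultimately show "inv A u \<in> polar K" by (simp add: polar_def)
    show "(1 + t) *\<^sub>R inv A u \<notin> polar K" if "t > 0" for t
    proof
      assume "(1 + t) *\<^sub>R inv A u \<in> polar K"
      moreover have "A u \<in> K" using K(2) u(1) by auto
      ultimately have "A u \<bullet> ((1 + t) *\<^sub>R inv A u) \<le> 1" by (auto simp: polar_def)
      moreover have "A u \<bullet> ((1 + t) *\<^sub>R inv A u) = 1 + t"
        using pairing by (metis inner_commute inner_scaleR_right mult.right_neutral)
      ultimately show False using \<open>t > 0\<close> by simp
    qed
  qed
  ultimately show ?thesis using u(2) pairing unfolding contact_pair_def by blast
qed

section \<open>Small perturbations of the unit ball inside a convex body\<close>

definition support_fun :: "'a::real_inner set \<Rightarrow> 'a \<Rightarrow> real" where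
  "support_fun K p = (SUP x\<in>K. p \<bullet> x)"

lemma bdd_above_inner_image:
  fixes K :: "'a::real_inner set"
  assumes "bounded K"
  shows "bdd_above ((\<lambda>x. p \<bullet> x) ` K)"
proof -
  obtain R where "\<And>x. x \<in> K \<Longrightarrow> norm x \<le> R" using assms bounded_iff by blast
  then have "p \<bullet> x \<le> norm p * R" if "x \<in> K" for x
    using that by (intro order_trans[OF norm_cauchy_schwarz mult_left_mono]) auto
  then show ?thesis unfolding bdd_above_def by blast
qed

lemma support_fun_upper: "bounded K \<Longrightarrow> x \<in> K \<Longrightarrow> p \<bullet> x \<le> support_fun K p"
  unfolding support_fun_def by (rule cSUP_upper[OF _ bdd_above_inner_image])

lemma support_fun_least: "K \<noteq> {} \<Longrightarrow> (\<And>x. x \<in> K \<Longrightarrow> p \<bullet> x \<le> c) \<Longrightarrow> support_fun K p \<le> c"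
  unfolding support_fun_def by (rule cSUP_least)

lemma continuous_on_support_fun:
  fixes K :: "'a::real_inner set"
  assumes "bounded K" "K \<noteq> {}"
  shows "continuous_on UNIV (support_fun K)"
proof -
  obtain R where R: "R > 0" "\<And>x. x \<in> K \<Longrightarrow> norm x \<le> R"
    using assms(1) bounded_pos by blast
  have lip: "support_fun K p \<le> support_fun K q + R * dist p q" for p q
  proof (rule support_fun_least[OF assms(2)])
    fix x assume "x \<in> K"
    have "(p - q) \<bullet> x \<le> norm (p - q) * R"
      using R \<open>x \<in> K\<close> by (intro order_trans[OF norm_cauchy_schwarz mult_left_mono]) auto
    then show "p \<bullet> x \<le> support_fun K q + R * dist p q"
      using support_fun_upper[OF assms(1) \<open>x \<in> K\<close>, of q]
      by (simp add: inner_diff_left dist_norm mult.commute)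
  qed
  show ?thesis
  proof (rule lipschitz_on_continuous_on[OF lipschitz_onI])
    show "dist (support_fun K p) (support_fun K q) \<le> R * dist p q" for p q
      using lip[of p q] lip[of q p] by (simp add: dist_real_def dist_commute abs_le_iff)
  qed (use R in simp)
qed

lemma support_fun_separation:
  fixes K :: "'a::euclidean_space set"
  assumes "closed K" "convex K" "K \<noteq> {}" "y \<notin> K"
  obtains p where "norm p = 1" "support_fun K p < p \<bullet> y"
proof -
  obtain a b where ab: "a \<bullet> y < b" "\<And>x. x \<in> K \<Longrightarrow> b < a \<bullet> x"
    using separating_hyperplane_closed_point[OF assms(2,1,4)] by blast
  then have "a \<noteq> 0" using assms(3) by force
  define p where "p = - ((1 / norm a) *\<^sub>R a)"
  have "p \<bullet> x \<le> - b / norm a" if "x \<in> K" for x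
    using divide_right_mono[of "- (a \<bullet> x)" "- b" "norm a"] ab(2)[OF that] by (simp add: p_def)
  then have "support_fun K p \<le> - b / norm a"
    by (rule support_fun_least[OF assms(3)])
  also have "\<dots> < p \<bullet> y"
    using ab(1) \<open>a \<noteq> 0\<close> by (simp add: p_def divide_simps)
  finally have "support_fun K p < p \<bullet> y" .
  moreover have "norm p = 1" using \<open>a \<noteq> 0\<close> by (simp add: p_def)
  ultimately show ?thesis using that by blast
qed

lemma norm_add_le_quadratic:
  fixes p s :: "'a::real_inner"
  assumes "norm p = 1"
  shows "norm (p + s) \<le> 1 + p \<bullet> s + (norm s)\<^sup>2 / 2"
proof (rule power2_le_imp_le)
  have "- (p \<bullet> s) \<le> norm s"
    using norm_cauchy_schwarz[of p "- s"] assms by simp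
  moreover have "0 \<le> (norm s)\<^sup>2 - 2 * norm s + 1"
    using zero_le_power2[of "norm s - 1"] by (simp add: power2_eq_square algebra_simps)
  ultimately show "0 \<le> 1 + p \<bullet> s + (norm s)\<^sup>2 / 2" by linarith
  have "p \<bullet> p = 1" using assms by (simp add: dot_square_norm)
  then have "(norm (p + s))\<^sup>2 = 1 + 2 * (p \<bullet> s) + (norm s)\<^sup>2"
    by (simp add: power2_norm_eq_inner inner_add_left inner_add_right inner_commute)
  also have "\<dots> \<le> 1 + 2 * (p \<bullet> s) + (norm s)\<^sup>2 + (p \<bullet> s + (norm s)\<^sup>2 / 2)\<^sup>2"
    by simp
  also have "\<dots> = (1 + p \<bullet> s + (norm s)\<^sup>2 / 2)\<^sup>2"
    by (simp add: power2_eq_square algebra_simps)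
  finally show "(norm (p + s))\<^sup>2 \<le> (1 + p \<bullet> s + (norm s)\<^sup>2 / 2)\<^sup>2" .
qed

lemma inner_perturbation_le:
  fixes p v z :: "'a::real_inner"
  assumes S: "\<And>x y. S x \<bullet> y = x \<bullet> S y" and p: "norm p = 1" "norm (S p) \<le> B"
    and v: "norm v \<le> 1" and "0 \<le> \<epsilon>"
  shows "p \<bullet> (v + \<epsilon> *\<^sub>R (S v + z)) \<le> 1 + \<epsilon> * (p \<bullet> S p + z \<bullet> p) + \<epsilon>\<^sup>2 * B\<^sup>2 / 2"
proof -
  have "p \<bullet> (v + \<epsilon> *\<^sub>R (S v + z)) = (p + \<epsilon> *\<^sub>R S p) \<bullet> v + \<epsilon> * (z \<bullet> p)"
    using S[of p v] by (simp add: inner_add_left inner_add_right inner_commute distrib_left)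
  also have "\<dots> \<le> norm (p + \<epsilon> *\<^sub>R S p) + \<epsilon> * (z \<bullet> p)"
    using norm_cauchy_schwarz[of "p + \<epsilon> *\<^sub>R S p" v] v
      mult_left_le[of "norm v" "norm (p + \<epsilon> *\<^sub>R S p)"]
    by simp
  also have "\<dots> \<le> 1 + \<epsilon> * (p \<bullet> S p + z \<bullet> p) + \<epsilon>\<^sup>2 * B\<^sup>2 / 2"
  proof -
    have "(norm (S p))\<^sup>2 \<le> B\<^sup>2" by (rule power_mono[OF p(2) norm_ge_zero])
    then have "(norm (\<epsilon> *\<^sub>R S p))\<^sup>2 \<le> \<epsilon>\<^sup>2 * B\<^sup>2"
      by (simp add: power_mult_distrib mult_left_mono)
    then show ?thesis
      using norm_add_le_quadratic[OF p(1), of "\<epsilon> *\<^sub>R S p"] by (simp add: algebra_simps)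
  qed
  finally show ?thesis .
qed

lemma compact_uniformly_pos:
  fixes f :: "'a::topological_space \<Rightarrow> real"
  assumes "compact S" "continuous_on S f" "\<And>x. x \<in> S \<Longrightarrow> 0 < f x"
  obtains \<eta> where "\<eta> > 0" "\<And>x. x \<in> S \<Longrightarrow> \<eta> \<le> f x"
proof (cases "S = {}")
  case False
  then obtain x0 where "x0 \<in> S" "\<And>x. x \<in> S \<Longrightarrow> f x0 \<le> f x"
    using continuous_attains_inf[OF assms(1) _ assms(2)] by blast
  then show ?thesis using that assms(3) by blast
qed (use that[of 1] in simp)

lemma uniform_inward_gap:
  fixes K :: "'a::euclidean_space set" and S :: "'a \<Rightarrow> 'a"
  assumes K: "compact K" "cball 0 1 \<subseteq> K" and S: "linear S"
    and inward: "\<And>u. norm u = 1 \<Longrightarrow> u \<in> frontier K \<Longrightarrow> u \<bullet> S u + z \<bullet> u < 0"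
  obtains \<eta> where "\<eta> > 0"
    "\<And>p. norm p = 1 \<Longrightarrow> \<eta> \<le> max (- (p \<bullet> S p + z \<bullet> p)) (support_fun K p - 1)"
proof -
  have "K \<noteq> {}" "bounded K" using K compact_imp_bounded by auto
  have pos: "0 < max (- (p \<bullet> S p + z \<bullet> p)) (support_fun K p - 1)" if p: "norm p = 1" for p
  proof (cases "support_fun K p \<le> 1")
    case True
    have "p \<in> frontier K"
    proof (rule frontier_radialI)
      show "p \<in> K" using K(2) p by auto
      show "(1 + t) *\<^sub>R p \<notin> K" if "t > 0" for t
        using support_fun_upper[OF \<open>bounded K\<close>, of "(1 + t) *\<^sub>R p" p] True that p
        by (auto simp: dot_square_norm)
    qed
    then show ?thesis using inward[OF p] by simp
  qed simp
  have cont: "continuous_on UNIV (\<lambda>p. max (- (p \<bullet> S p + z \<bullet> p)) (support_fun K p - 1))"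
    using continuous_on_support_fun[OF \<open>bounded K\<close> \<open>K \<noteq> {}\<close>] linear_continuous_on[of S]
    by (intro continuous_intros) (simp_all add: linear_linear S)
  show ?thesis
    by (rule compact_uniformly_pos[OF compact_sphere[of 0 1] continuous_on_subset[OF cont subset_UNIV]])
      (use pos that in auto)
qed

lemma perturbation_estimate_contradiction:
  fixes \<epsilon> \<eta> g h B Z :: real
  assumes \<epsilon>: "0 < \<epsilon>" "\<epsilon> < 1" "\<epsilon> * (B + Z + B\<^sup>2) < \<eta>" and "0 \<le> B" "0 \<le> Z"
    and "g \<le> B + Z" "1 \<le> h" "h < 1 + \<epsilon> * g + \<epsilon>\<^sup>2 * B\<^sup>2 / 2" "\<eta> \<le> max (- g) (h - 1)"
  shows False
proof -
  have "\<epsilon> * g \<le> \<epsilon> * (B + Z)" using \<epsilon> \<open>g \<le> B + Z\<close> by (simp add: mult_left_mono)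
  moreover have "\<epsilon>\<^sup>2 * B\<^sup>2 \<le> \<epsilon> * B\<^sup>2"
    using \<epsilon> by (intro mult_right_mono) (simp_all add: power2_eq_square mult_left_le_one_le)
  moreover have "\<epsilon> * (B + Z + B\<^sup>2) = \<epsilon> * (B + Z) + \<epsilon> * B\<^sup>2" by (simp add: algebra_simps)
  moreover have "0 \<le> \<epsilon> * B\<^sup>2" "0 \<le> \<epsilon> * (B + Z)" using \<epsilon> assms(4,5) by simp_all
  ultimately have "\<epsilon> * g + \<epsilon>\<^sup>2 * B\<^sup>2 / 2 < \<eta>" and "\<epsilon> * B\<^sup>2 / 2 < \<eta>"
    using \<epsilon>(3) by linarith+
  moreover have "\<epsilon>\<^sup>2 * B\<^sup>2 / 2 < \<epsilon> * \<eta>"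
    using mult_strict_left_mono[OF \<open>\<epsilon> * B\<^sup>2 / 2 < \<eta>\<close> \<epsilon>(1)] by (simp add: power2_eq_square mult.assoc)
  moreover have "\<eta> \<le> - g \<Longrightarrow> \<epsilon> * \<eta> \<le> - (\<epsilon> * g)"
    using \<epsilon> mult_left_mono[of \<eta> "- g" \<epsilon>] by simp
  moreover have "\<eta> \<le> - g \<or> \<eta> \<le> h - 1" using assms(9) by (simp add: le_max_iff_disj)
  ultimately show False using assms(7,8) by linarith
qed

lemma eventually_perturbed_cball_subset:
  fixes K :: "'a::euclidean_space set" and S :: "'a \<Rightarrow> 'a"
  assumes K: "compact K" "convex K" "cball 0 1 \<subseteq> K"
    and S: "linear S" "\<And>x y. S x \<bullet> y = x \<bullet> S y"
    and inward: "\<And>u. norm u = 1 \<Longrightarrow> u \<in> frontier K \<Longrightarrow> u \<bullet> S u + z \<bullet> u < 0"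
  shows "\<forall>\<^sub>F \<epsilon> in at_right 0. (\<lambda>v. v + \<epsilon> *\<^sub>R (S v + z)) ` cball 0 1 \<subseteq> K"
proof -
  have "K \<noteq> {}" "bounded K" using K(1,3) compact_imp_bounded by auto
  obtain \<eta> where "\<eta> > 0"
    and gap: "\<And>p. norm p = 1 \<Longrightarrow> \<eta> \<le> max (- (p \<bullet> S p + z \<bullet> p)) (support_fun K p - 1)"
    using uniform_inward_gap[OF K(1,3) S(1) inward] by blast
  obtain B where B: "B > 0" "\<And>x. norm (S x) \<le> B * norm x" using linear_bounded_pos[OF S(1)] by blast
  define C where "C = B + norm z + B\<^sup>2"
  have "C > 0" using B by (simp add: C_def add_pos_nonneg)
  have "\<forall>\<^sub>F \<epsilon> in at_right 0. 0 < \<epsilon> \<and> \<epsilon> < 1 \<and> \<epsilon> * C < \<eta>"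
    unfolding eventually_at_right_field
    using \<open>C > 0\<close> \<open>\<eta> > 0\<close> by (intro exI[of _ "min 1 (\<eta> / C)"]) (auto simp: pos_less_divide_eq)
  then show ?thesis
  proof (rule eventually_mono)
    fix \<epsilon> :: real
    assume \<epsilon>: "0 < \<epsilon> \<and> \<epsilon> < 1 \<and> \<epsilon> * C < \<eta>"
    show "(\<lambda>v. v + \<epsilon> *\<^sub>R (S v + z)) ` cball 0 1 \<subseteq> K"
    proof (rule image_subsetI, rule ccontr)
      fix v :: 'a
      assume v: "v \<in> cball 0 1" and out: "v + \<epsilon> *\<^sub>R (S v + z) \<notin> K"
      obtain p where p: "norm p = 1" and sep: "support_fun K p < p \<bullet> (v + \<epsilon> *\<^sub>R (S v + z))"
        using support_fun_separation[OF compact_imp_closed[OF K(1)] K(2) \<open>K \<noteq> {}\<close> out] by blast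
      have Sp: "norm (S p) \<le> B" using B(2)[of p] p by simp
      then have "p \<bullet> (v + \<epsilon> *\<^sub>R (S v + z)) \<le> 1 + \<epsilon> * (p \<bullet> S p + z \<bullet> p) + \<epsilon>\<^sup>2 * B\<^sup>2 / 2"
        using v \<epsilon> by (intro inner_perturbation_le[OF S(2) p]) auto
      then have above: "support_fun K p < 1 + \<epsilon> * (p \<bullet> S p + z \<bullet> p) + \<epsilon>\<^sup>2 * B\<^sup>2 / 2"
        using sep by linarith
      have g_le: "p \<bullet> S p + z \<bullet> p \<le> B + norm z"
        using norm_cauchy_schwarz[of p "S p"] norm_cauchy_schwarz[of z p] Sp p by simp
      have "p \<in> K" using K(3) p by auto
      then have h_ge: "1 \<le> support_fun K p"
        using support_fun_upper[OF \<open>bounded K\<close>, of p p] p by (simp add: dot_square_norm)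
      have "0 < \<epsilon>" "\<epsilon> < 1" "\<epsilon> * (B + norm z + B\<^sup>2) < \<eta>" using \<epsilon> by (simp_all add: C_def)
      from perturbation_estimate_contradiction[OF this less_imp_le[OF B(1)] norm_ge_zero g_le h_ge
          above gap[OF p]]
      show False .
    qed
  qed
qed

section \<open>The first-order condition for maximal volume\<close>

definition F_symmetric_map :: "'a::euclidean_space set \<Rightarrow> ('a \<Rightarrow> 'a) \<Rightarrow> bool" where
  "F_symmetric_map F S \<longleftrightarrow> linear S \<and> (\<forall>x y. S x \<bullet> y = x \<bullet> S y) \<and> S ` F \<subseteq> F \<and>
     (\<exists>b. \<forall>x\<in>orth_compl F. S x = b *\<^sub>R x)"

lemma F_operatorI:
  fixes M :: "'a::euclidean_space \<Rightarrow> 'a"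
  assumes "linear M" "bij M" "M ` F \<subseteq> F" "\<And>x. x \<in> orth_compl F \<Longrightarrow> M x = c *\<^sub>R x"
  shows "F_operator F M"
proof -
  have "M ` orth_compl F \<subseteq> orth_compl F"
    using assms(4) by (auto simp: orth_compl_def)
  moreover have "\<exists>c. c \<noteq> 0 \<and> (\<forall>x\<in>orth_compl F. M x = c *\<^sub>R x)"
  proof (cases "c = 0")
    case True
    have "x = 0" if "x \<in> orth_compl F" for x
      using assms(4)[OF that] True linear_0[OF assms(1)] bij_is_inj[OF assms(2)]
      by (metis injD scale_zero_left)
    then show ?thesis using linear_0[OF assms(1)] by (intro exI[of _ 1]) auto
  qed (use assms(4) in auto)
  ultimately show ?thesis using assms(1-3) by (simp add: F_operator_def)
qed

lemma F_operator_comp: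
  assumes A: "F_operator F A" and M: "linear M" "bij M" "M ` F \<subseteq> F"
    and M_compl: "\<And>x. x \<in> orth_compl F \<Longrightarrow> M x = c *\<^sub>R x"
  shows "F_operator F (A \<circ> M)"
proof -
  obtain a where "linear A" "bij A" "A ` F \<subseteq> F" "\<And>x. x \<in> orth_compl F \<Longrightarrow> A x = a *\<^sub>R x"
    using A unfolding F_operator_def by blast
  with M M_compl show ?thesis
    by (intro F_operatorI[where c = "a * c"])
      (auto simp: linear_compose bij_comp linear_scale orth_compl_def)
qed

lemma F_operator_comp_id_plus:
  assumes A: "F_operator F A" and F: "subspace F" and S: "F_symmetric_map F S"
    and inj: "inj (\<lambda>x. x + \<epsilon> *\<^sub>R S x)"
  shows "F_operator F (A \<circ> (\<lambda>x. x + \<epsilon> *\<^sub>R S x))"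
proof -
  obtain b where linS: "linear S" and SF: "S ` F \<subseteq> F"
    and S_compl: "\<And>x. x \<in> orth_compl F \<Longrightarrow> S x = b *\<^sub>R x"
    using S unfolding F_symmetric_map_def by blast
  have lin: "linear (\<lambda>x. x + \<epsilon> *\<^sub>R S x)"
    using linS by (intro linear_compose_add linear_ident linear_compose_scale_right)
  show ?thesis
  proof (rule F_operator_comp[OF A lin])
    show "bij (\<lambda>x. x + \<epsilon> *\<^sub>R S x)" using inj lin by (simp add: bij_def linear_injective_imp_surjective)
    show "(\<lambda>x. x + \<epsilon> *\<^sub>R S x) ` F \<subseteq> F" using SF F by (auto simp: subspace_add subspace_scale)
    show "x + \<epsilon> *\<^sub>R S x = (1 + \<epsilon> * b) *\<^sub>R x" if "x \<in> orth_compl F" for x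
      using S_compl[OF that] by (simp add: algebra_simps)
  qed
qed

lemma measure_perturbed_ellipsoid_gt:
  fixes A M :: "'a::euclidean_space \<Rightarrow> 'a"
  assumes A: "linear A" "inj A" and M: "linear M" "det (coord_matrix M) > 1"
  shows "measure lebesgue ((\<lambda>x. A (M x) + w) ` cball 0 1) > measure lebesgue (A ` cball 0 1)"
proof -
  have "measure lebesgue (A ` cball 0 1) > 0"
    using det_coord_matrix_nonzero_iff[OF A(1)] A measure_cball_pos
    by (simp add: measure_linear_image_euclidean)
  then show ?thesis
    using M by (simp add: measure_translated_comp_image A(1))
qed

lemma max_volume_ellipsoid_first_order:
  fixes K F :: "'a::euclidean_space set" and A S :: "'a \<Rightarrow> 'a"
  assumes K: "convex_body K" and F: "subspace F" and A: "F_operator F A"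
    and E: "A ` cball 0 1 \<subseteq> K"
    and max: "\<And>E'. ellipsoid_rev F E' \<Longrightarrow> E' \<subseteq> K \<Longrightarrow>
                measure lebesgue E' \<le> measure lebesgue (A ` cball 0 1)"
    and S: "F_symmetric_map F S" "trace_op S > 0"
  shows "\<exists>u. norm u = 1 \<and> A u \<in> frontier K \<and> 0 \<le> u \<bullet> S u + z \<bullet> u"
proof (rule ccontr)
  assume "\<not> ?thesis"
  then have inward: "u \<bullet> S u + z \<bullet> u < 0" if "norm u = 1" "A u \<in> frontier K" for u
    using that by force
  have lin: "linear A" "bij A" using A by (auto simp: F_operator_def)
  note inv = linear_inv_bij[OF lin]
  have linS: "linear S" and symS: "\<And>x y. S x \<bullet> y = x \<bullet> S y"
    using S(1) by (auto simp: F_symmetric_map_def)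
  define K' where "K' = inv A ` K"
  have K': "compact K'" "convex K'" "cball 0 1 \<subseteq> K'"
    using K E by (force simp: K'_def convex_body_def compact_linear_image convex_linear_image inv)+
  have "\<forall>\<^sub>F \<epsilon> in at_right 0. (\<lambda>v. v + \<epsilon> *\<^sub>R (S v + z)) ` cball 0 1 \<subseteq> K'"
  proof (rule eventually_perturbed_cball_subset[OF K' linS symS])
    show "u \<bullet> S u + z \<bullet> u < 0" if "norm u = 1" "u \<in> frontier K'" for u
      using that by (intro inward) (auto simp: K'_def frontier_bij_linear_image inv)
  qed
  moreover have "\<forall>\<^sub>F \<epsilon> in at_right 0. det (mat 1 + \<epsilon> *\<^sub>R coord_matrix S) > 1"
    using S(2) by (intro eventually_det_id_plus_gt_1) (simp add: trace_coord_matrix)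
  ultimately have small: "\<forall>\<^sub>F \<epsilon> in at_right 0. (\<lambda>v. v + \<epsilon> *\<^sub>R (S v + z)) ` cball 0 1 \<subseteq> K' \<and>
      det (mat 1 + \<epsilon> *\<^sub>R coord_matrix S) > 1"
    by (rule eventually_conj)
  obtain \<epsilon> where inside: "(\<lambda>v. v + \<epsilon> *\<^sub>R (S v + z)) ` cball 0 1 \<subseteq> K'"
    and det_M: "det (coord_matrix (\<lambda>x. x + \<epsilon> *\<^sub>R S x)) > 1"
    using eventually_happens'[OF trivial_limit_at_right_real small] by (auto simp: coord_matrix_id_plus)
  define M where "M x = x + \<epsilon> *\<^sub>R S x" for x
  have linM: "linear M"
    unfolding M_def using linS by (intro linear_compose_add linear_ident linear_compose_scale_right)
  have det_M': "det (coord_matrix M) > 1" using det_M unfolding M_def .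
  then have "inj M" using det_coord_matrix_nonzero_iff[OF linM] by simp
  then have "ellipsoid_rev F ((\<lambda>x. (A \<circ> M) x + A (\<epsilon> *\<^sub>R z)) ` cball 0 1)"
    unfolding ellipsoid_rev_def M_def[abs_def] using F_operator_comp_id_plus[OF A F S(1)] by blast
  moreover have "(\<lambda>x. (A \<circ> M) x + A (\<epsilon> *\<^sub>R z)) ` cball 0 1 = A ` (\<lambda>v. v + \<epsilon> *\<^sub>R (S v + z)) ` cball 0 1"
    by (auto simp: image_image M_def linear_add[OF lin(1)] scaleR_add_right add.assoc)
  moreover have "A ` (\<lambda>v. v + \<epsilon> *\<^sub>R (S v + z)) ` cball 0 1 \<subseteq> K"
    using inside by (auto simp: K'_def inv)
  ultimately have "measure lebesgue ((\<lambda>x. (A \<circ> M) x + A (\<epsilon> *\<^sub>R z)) ` cball 0 1)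
      \<le> measure lebesgue (A ` cball 0 1)"
    using max by simp
  then show False
    using measure_perturbed_ellipsoid_gt[OF lin(1) bij_is_inj[OF lin(2)] linM det_M', of "A (\<epsilon> *\<^sub>R z)"]
    by simp
qed

section \<open>John's condition\<close>

definition columns :: "('a::euclidean_space \<Rightarrow> 'a) \<Rightarrow> 'a ^ 'a basis_index" where
  "columns f = (\<chi> i. f (basis_vec i))"

lemma columns_inject:
  assumes "linear f" "linear g"
  shows "columns f = columns g \<longleftrightarrow> f = g"
proof
  assume "columns f = columns g"
  then have "\<forall>b\<in>Basis. f b = g b" unfolding ball_Basis_iff by (simp add: columns_def vec_eq_iff)
  then show "f = g" using linear_eq_stdbasis[OF assms] by blast
qed simp

lemma columns_sum_scaleR: "columns (\<lambda>x. \<Sum>i\<in>I. c i *\<^sub>R f i x) = (\<Sum>i\<in>I. c i *\<^sub>R columns (f i))"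
  by (simp add: columns_def vec_eq_iff)

lemma inner_columns: "h \<bullet> columns f = (\<Sum>i\<in>UNIV. h $ i \<bullet> f (basis_vec i))"
  by (simp add: columns_def inner_vec_def)

definition sym_outer_sum :: "('i::finite \<Rightarrow> 'a) \<Rightarrow> ('i \<Rightarrow> 'a) \<Rightarrow> 'a \<Rightarrow> 'a::real_inner" where
  "sym_outer_sum a c x = (\<Sum>i\<in>UNIV. (x \<bullet> a i) *\<^sub>R c i + (x \<bullet> c i) *\<^sub>R a i) /\<^sub>R 2"

lemma linear_sym_outer_sum: "linear (sym_outer_sum a c)"
  by (rule linearI)
    (simp_all add: sym_outer_sum_def inner_add_left scaleR_add_left sum.distrib scaleR_sum_right
      algebra_simps)

lemma inner_sym_outer_sum:
  "sym_outer_sum a c x \<bullet> y = (\<Sum>i\<in>UNIV. (x \<bullet> a i) * (c i \<bullet> y) + (x \<bullet> c i) * (a i \<bullet> y)) / 2"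
  by (simp add: sym_outer_sum_def inner_sum_left inner_add_left)

lemma sym_outer_sum_self_adjoint: "sym_outer_sum a c x \<bullet> y = x \<bullet> sym_outer_sum a c y"
proof -
  have "sym_outer_sum a c x \<bullet> y = sym_outer_sum a c y \<bullet> x"
    unfolding inner_sym_outer_sum
    by (intro arg_cong[where f = "\<lambda>s. s / 2"] sum.cong) (simp_all add: inner_commute)
  then show ?thesis by (simp add: inner_commute)
qed

lemma quadratic_sym_outer_sum: "x \<bullet> sym_outer_sum a c x = (\<Sum>i\<in>UNIV. (x \<bullet> a i) * (x \<bullet> c i))"
proof -
  have "x \<bullet> sym_outer_sum a c x = sym_outer_sum a c x \<bullet> x" by (rule inner_commute)
  also have "\<dots> = (\<Sum>i\<in>UNIV. 2 * ((x \<bullet> a i) * (x \<bullet> c i))) / 2"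
    unfolding inner_sym_outer_sum
    by (intro arg_cong[where f = "\<lambda>s. s / 2"] sum.cong) (simp_all add: inner_commute)
  finally show ?thesis by (simp add: sum_distrib_left[symmetric])
qed

lemma trace_op_sym_outer_sum:
  fixes a c :: "'i::finite \<Rightarrow> 'a::euclidean_space"
  shows "trace_op (sym_outer_sum a c) = (\<Sum>i\<in>UNIV. a i \<bullet> c i)"
proof -
  have "trace_op (sym_outer_sum a c) = (\<Sum>b\<in>Basis. \<Sum>i\<in>UNIV. (b \<bullet> a i) * (b \<bullet> c i))"
    by (simp add: trace_op_def quadratic_sym_outer_sum)
  also have "\<dots> = (\<Sum>i\<in>UNIV. a i \<bullet> c i)"
    by (subst sum.swap) (simp add: euclidean_inner[of "a _"] inner_commute)
  finally show ?thesis .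
qed

lemma sym_outer_sum_in_subspace:
  "subspace F \<Longrightarrow> (\<And>i. a i \<in> F) \<Longrightarrow> (\<And>i. c i \<in> F) \<Longrightarrow> sym_outer_sum a c x \<in> F"
  unfolding sym_outer_sum_def
  by (intro subspace_scale subspace_sum subspace_add) auto

lemma sym_outer_sum_orthogonal:
  "(\<And>i. x \<bullet> a i = 0) \<Longrightarrow> (\<And>i. x \<bullet> c i = 0) \<Longrightarrow> sym_outer_sum a c x = 0"
  by (simp add: sym_outer_sum_def)

lemma F_symmetric_map_diff_sym_outer_sum:
  fixes a c :: "'i::finite \<Rightarrow> 'a::euclidean_space"
  assumes F: "subspace F" and "\<And>i. a i \<in> F" "\<And>i. c i \<in> F"
  shows "F_symmetric_map F (\<lambda>x. \<beta> *\<^sub>R x - sym_outer_sum a c x)"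
  unfolding F_symmetric_map_def
proof (intro conjI allI exI ballI)
  show "linear (\<lambda>x. \<beta> *\<^sub>R x - sym_outer_sum a c x)"
    by (intro linear_compose_sub linear_compose_scale_right linear_ident linear_sym_outer_sum)
  show "(\<beta> *\<^sub>R x - sym_outer_sum a c x) \<bullet> y = x \<bullet> (\<beta> *\<^sub>R y - sym_outer_sum a c y)" for x y
    by (simp add: inner_diff_left inner_diff_right sym_outer_sum_self_adjoint)
  show "(\<lambda>x. \<beta> *\<^sub>R x - sym_outer_sum a c x) ` F \<subseteq> F"
    using assms by (auto simp: subspace_diff subspace_scale sym_outer_sum_in_subspace)
  show "\<beta> *\<^sub>R x - sym_outer_sum a c x = \<beta> *\<^sub>R x" if "x \<in> orth_compl F" for x
  proof -
    have "x \<bullet> a i = 0" "x \<bullet> c i = 0" for i using that assms(2,3) by (auto simp: orth_compl_def)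
    then show ?thesis by (simp add: sym_outer_sum_orthogonal)
  qed
qed

lemma trace_op_scaleR_id_diff:
  "trace_op (\<lambda>x. \<beta> *\<^sub>R x - f x) = real DIM('a) * \<beta> - trace_op (f :: 'a::euclidean_space \<Rightarrow> 'a)"
  by (simp add: trace_op_def inner_diff_right sum_subtractf)

(* John's condition P (\<Sum>\<^sub>i \<alpha>\<^sub>i u\<^sub>i \<otimes> u\<^sub>i) P = P, \<Sum>\<^sub>i \<alpha>\<^sub>i u\<^sub>i = 0, \<Sum>\<^sub>i \<alpha>\<^sub>i = d, with P the
   projection onto F, says that john_target F is the convex combination of the john_vec F u\<^sub>i
   with weights \<alpha>\<^sub>i / d. *)
definition john_vec :: "'a::euclidean_space set \<Rightarrow> 'a \<Rightarrow> ('a ^ 'a basis_index) \<times> 'a" where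
  "john_vec F u = (columns (\<lambda>x. orth_proj F (tensor_self u (orth_proj F x))), u)"

definition john_target :: "'a::euclidean_space set \<Rightarrow> ('a ^ 'a basis_index) \<times> 'a" where
  "john_target F = (columns (orth_proj F) /\<^sub>R real DIM('a), 0)"

lemma john_vec_eq:
  assumes "subspace F"
  shows "john_vec F u = ((\<chi> i. (u \<bullet> orth_proj F (basis_vec i)) *\<^sub>R orth_proj F u), u)"
  by (simp add: john_vec_def columns_def tensor_self_def linear_scale[OF linear_orth_proj[OF assms]])

lemma inner_john_vec:
  fixes F :: "'a::euclidean_space set"
  assumes F: "subspace F"
  shows "(h, w) \<bullet> john_vec F u
    = u \<bullet> sym_outer_sum (\<lambda>i. orth_proj F (basis_vec i)) (\<lambda>i. orth_proj F (h $ i)) u + w \<bullet> u"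
proof -
  have "h $ i \<bullet> orth_proj F u = u \<bullet> orth_proj F (h $ i)" for i
    by (metis inner_commute inner_orth_proj_commute[OF F])
  then show ?thesis by (simp add: john_vec_eq[OF F] inner_vec_def quadratic_sym_outer_sum)
qed

lemma inner_john_target:
  fixes F :: "'a::euclidean_space set"
  shows "(h, w) \<bullet> john_target F = (\<Sum>i\<in>UNIV. h $ i \<bullet> orth_proj F (basis_vec i)) / real DIM('a)"
  by (simp add: john_target_def inner_columns divide_inverse mult.commute)

lemma john_target_in_convex_hull:
  fixes F U :: "'a::euclidean_space set"
  assumes F: "subspace F" and U: "compact U" "\<And>u. u \<in> U \<Longrightarrow> norm u = 1"
    and no_improvement: "\<And>S z. F_symmetric_map F S \<Longrightarrow> trace_op S > 0 \<Longrightarrow> \<exists>u\<in>U. 0 \<le> u \<bullet> S u + z \<bullet> u"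
  shows "john_target F \<in> convex hull (john_vec F ` U)"
proof (rule ccontr)
  assume "john_target F \<notin> convex hull (john_vec F ` U)"
  moreover have "compact (convex hull (john_vec F ` U))"
    unfolding john_vec_eq[OF F]
    using linear_orth_proj[OF F] U(1)
    by (intro compact_convex_hull compact_continuous_image continuous_intros)
      (auto simp: linear_continuous_on linear_linear)
  ultimately obtain a \<beta> where below: "a \<bullet> john_target F < \<beta>"
    and above: "\<And>y. y \<in> convex hull (john_vec F ` U) \<Longrightarrow> \<beta> < a \<bullet> y"
    using separating_hyperplane_closed_point[OF convex_convex_hull compact_imp_closed] by blast
  obtain h w where a: "a = (h, w)" by (cases a)
  define P where "P = orth_proj F"
  define Q where "Q = sym_outer_sum (\<lambda>i. P (basis_vec i)) (\<lambda>i. P (h $ i))"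
  define S where "S x = \<beta> *\<^sub>R x - Q x" for x
  (* (h, w) pairs with john_vec F u as <Q u, u> + <w, u>, see inner_john_vec *)
  have "F_symmetric_map F S"
    unfolding S_def[abs_def] Q_def P_def
    by (intro F_symmetric_map_diff_sym_outer_sum F orth_proj_in)
  moreover have "trace_op S > 0"
  proof -
    have "trace_op Q = (\<Sum>i\<in>UNIV. P (basis_vec i) \<bullet> P (h $ i))"
      unfolding Q_def by (rule trace_op_sym_outer_sum)
    also have "\<dots> = (\<Sum>i\<in>UNIV. h $ i \<bullet> P (basis_vec i))"
      by (intro sum.cong refl) (metis P_def F inner_commute inner_orth_proj_commute orth_proj_idem)
    also have "\<dots> = real DIM('a) * (a \<bullet> john_target F)"
      by (simp add: a inner_john_target P_def)
    finally show ?thesis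
      using below by (simp add: S_def[abs_def] trace_op_scaleR_id_diff)
  qed
  ultimately obtain u where "u \<in> U" "0 \<le> u \<bullet> S u + (- w) \<bullet> u"
    using no_improvement[of S "- w"] by blast
  moreover have "\<beta> < a \<bullet> john_vec F u"
    by (rule above[OF hull_inc[OF imageI[OF \<open>u \<in> U\<close>]]])
  moreover have "u \<bullet> u = 1" using U(2)[OF \<open>u \<in> U\<close>] by (simp add: dot_square_norm)
  ultimately show False
    by (simp add: a inner_john_vec[OF F] S_def Q_def P_def inner_diff_right)
qed

lemma convex_hull_image_indexed:
  assumes "y \<in> convex hull (f ` U)"
  obtains m :: nat and x c where "\<forall>i<m. x i \<in> U \<and> c i > 0" "(\<Sum>i<m. c i) = 1"
    "(\<Sum>i<m. c i *\<^sub>R f (x i)) = y"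
proof -
  obtain T w where T: "finite T" "T \<subseteq> f ` U" "\<forall>v\<in>T. 0 \<le> w v" "sum w T = 1"
    "(\<Sum>v\<in>T. w v *\<^sub>R v) = y"
    using assms unfolding convex_hull_explicit by blast
  define T' where "T' = {v \<in> T. w v > 0}"
  have drop_zeros: "(\<Sum>v\<in>T'. g v) = (\<Sum>v\<in>T. g v)" if "\<And>v. w v = 0 \<Longrightarrow> g v = 0"
    for g :: "_ \<Rightarrow> 'z::comm_monoid_add"
    using T(1,3) that by (intro sum.mono_neutral_left) (auto simp: T'_def less_eq_real_def)
  obtain e where e: "bij_betw e {..<card T'} T'"
    using ex_bij_betw_nat_finite[of T'] T(1) by (auto simp: T'_def atLeast0LessThan)
  define x where "x i = inv_into U f (e i)" for i
  have eT: "e i \<in> f ` U \<and> w (e i) > 0" if "i < card T'" for i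
    using bij_betwE[OF e] that T(2) by (auto simp: T'_def)
  then have x: "x i \<in> U \<and> w (e i) > 0" and fx: "f (x i) = e i" if "i < card T'" for i
    using that by (simp_all add: x_def inv_into_into f_inv_into_f)
  have weights: "(\<Sum>i<card T'. w (e i)) = 1"
    using T(4) by (simp add: sum.reindex_bij_betw[OF e] drop_zeros)
  have "(\<Sum>i<card T'. w (e i) *\<^sub>R f (x i)) = (\<Sum>i<card T'. w (e i) *\<^sub>R e i)"
    by (rule sum.cong) (simp_all add: fx)
  also have "\<dots> = y"
    using T(5) sum.reindex_bij_betw[OF e, of "\<lambda>v. w v *\<^sub>R v"] by (simp add: drop_zeros)
  finally show ?thesis
    using x weights by (intro that[of "card T'" x "\<lambda>i. w (e i)"]) simp_all
qed

lemma linear_tensor_self: "linear (tensor_self u)"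
  by (rule linearI) (simp_all add: tensor_self_def inner_add_right scaleR_add_left)

lemma john_condition_of_combination:
  fixes F :: "'a::euclidean_space set"
  assumes F: "subspace F"
    and comb: "(\<Sum>i<m. \<alpha> i *\<^sub>R john_vec F (u i)) = real DIM('a) *\<^sub>R john_target F"
  shows "(\<lambda>x. orth_proj F (\<Sum>i<m. \<alpha> i *\<^sub>R tensor_self (u i) (orth_proj F x))) = orth_proj F"
    and "(\<Sum>i<m. \<alpha> i *\<^sub>R u i) = 0"
proof -
  have linP: "linear (orth_proj F)" by (rule linear_orth_proj[OF F])
  have "columns (\<lambda>x. orth_proj F (\<Sum>i<m. \<alpha> i *\<^sub>R tensor_self (u i) (orth_proj F x)))
      = fst (\<Sum>i<m. \<alpha> i *\<^sub>R john_vec F (u i))"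
    by (simp add: linear_sum[OF linP] linear_scale[OF linP] columns_sum_scaleR john_vec_def fst_sum)
  also have "\<dots> = columns (orth_proj F)"
    by (simp add: comb john_target_def)
  finally have cols: "columns (\<lambda>x. orth_proj F (\<Sum>i<m. \<alpha> i *\<^sub>R tensor_self (u i) (orth_proj F x)))
      = columns (orth_proj F)" .
  have "linear (\<lambda>x. orth_proj F (\<Sum>i<m. \<alpha> i *\<^sub>R tensor_self (u i) (orth_proj F x)))"
    using linear_compose[OF linear_compose[OF linP] linP,
        of "\<lambda>y. \<Sum>i<m. \<alpha> i *\<^sub>R tensor_self (u i) y"]
    by (simp add: comp_def linear_compose_sum linear_compose_scale_right linear_tensor_self)
  then show "(\<lambda>x. orth_proj F (\<Sum>i<m. \<alpha> i *\<^sub>R tensor_self (u i) (orth_proj F x))) = orth_proj F"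
    using cols columns_inject[OF _ linP] by simp
  have "(\<Sum>i<m. \<alpha> i *\<^sub>R u i) = snd (\<Sum>i<m. \<alpha> i *\<^sub>R john_vec F (u i))"
    by (simp add: john_vec_def snd_sum)
  then show "(\<Sum>i<m. \<alpha> i *\<^sub>R u i) = 0"
    by (simp add: comb john_target_def)
qed

theorem mainTheorem14:
  fixes K F :: "'a::euclidean_space set" and A :: "'a \<Rightarrow> 'a"
  assumes "convex_body K"
    and "subspace F"
    and "F_operator F A"
    and "pos_def_op A"
    and "A ` cball 0 1 \<subseteq> K"
    and "\<And>E'. ellipsoid_rev F E' \<Longrightarrow> E' \<subseteq> K \<Longrightarrow>
           measure lebesgue E' \<le> measure lebesgue (A ` cball 0 1)"
  shows "\<exists>(m::nat) (u::nat \<Rightarrow> 'a) (\<alpha>::nat \<Rightarrow> real).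
           (\<forall>i<m. norm (u i) = 1 \<and> \<alpha> i > 0 \<and>
                   contact_pair (A ` cball 0 1) K (A (u i)) (inv A (u i))) \<and>
           (\<lambda>x. orth_proj F ((\<Sum>i<m. \<alpha> i *\<^sub>R tensor_self (u i) (orth_proj F x)))) = orth_proj F \<and>
           (\<Sum>i<m. \<alpha> i *\<^sub>R u i) = 0 \<and>
           (\<Sum>i<m. \<alpha> i) = real DIM('a)"
proof -
  have A: "linear A" "bij A" "\<And>x y. A x \<bullet> y = x \<bullet> A y"
    using assms(3,4) by (auto simp: F_operator_def pos_def_op_def)
  define U where "U = sphere 0 1 \<inter> A -` frontier K"
  have "compact U"
    unfolding U_def using A(1)
    by (intro compact_Int_closed continuous_closed_vimage) (auto simp: linear_continuous_at linear_linear)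
  then have "john_target F \<in> convex hull (john_vec F ` U)"
  proof (rule john_target_in_convex_hull[OF assms(2)])
    show "norm u = 1" if "u \<in> U" for u using that by (simp add: U_def)
    show "\<exists>u\<in>U. 0 \<le> u \<bullet> S u + z \<bullet> u" if "F_symmetric_map F S" "trace_op S > 0" for S z
      using max_volume_ellipsoid_first_order[OF assms(1-3,5,6) that, of z] by (auto simp: U_def)
  qed
  then obtain m :: nat and u c where u: "\<forall>i<m. u i \<in> U \<and> c i > 0" and "(\<Sum>i<m. c i) = 1"
    and comb: "(\<Sum>i<m. c i *\<^sub>R john_vec F (u i)) = john_target F"
    by (rule convex_hull_image_indexed)
  define \<alpha> where "\<alpha> i = real DIM('a) * c i" for i
  have "(\<Sum>i<m. \<alpha> i *\<^sub>R john_vec F (u i)) = real DIM('a) *\<^sub>R john_target F"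
    by (simp add: \<alpha>_def scaleR_sum_right comb[symmetric])
  note john = john_condition_of_combination[OF assms(2) this]
  have "(\<Sum>i<m. \<alpha> i) = real DIM('a)"
    using \<open>(\<Sum>i<m. c i) = 1\<close> by (simp add: \<alpha>_def sum_distrib_left[symmetric])
  moreover have "\<forall>i<m. norm (u i) = 1 \<and> \<alpha> i > 0 \<and>
      contact_pair (A ` cball 0 1) K (A (u i)) (inv A (u i))"
    using u assms(1,5)
    by (auto simp: U_def \<alpha>_def convex_body_def intro!: contact_pair_of_frontier_point[OF A])
  ultimately show ?thesis using john by blast
qed

end
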